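(* Let $g$ be an $n$-variable Boolean function and $b\in\mathbb{F}_2$. Let $g_b$ be the $(n+1)$-variable Boolean function $$g_b(X_{n+1},X_n,\ldots,X_1)=(1\oplus X_{n+1})\,g(X_n,\ldots,X_1)\oplus X_{n+1}\bigl(b\oplus g(1\oplus X_n,\ldots,1\oplus X_1)\bigr).$$ Then: (1) for every $\bm{\beta}=(a,\bm{\alpha})\in\mathbb{F}_2^{n+1}$ with $a\in\mathbb{F}_2$ (the coordinate corresponding to $X_{n+1}$) and $\bm{\alpha}\in\mathbb{F}_2^n$, $$W_{g_b}(\bm{\beta})=\frac{1+(-1)^{b+\mathrm{wt}(\bm{\beta})}}{2}\,W_g(\bm{\alpha});$$ (2) $H_\infty(g_b)=H_\infty(g)$; (3) $\mathrm{Inf}(g_b)=\mathrm{Inf}(g)+\epsilon_b(g)$, where $\epsilon_b(g)=\sum_{\bm{\alpha}\in\mathbb{F}_2^n,\ \mathrm{wt}(\bm{\alpha})\not\equiv b \pmod 2}W_g^2(\bm{\alpha})$.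
   Context: Boolean functions are maps $\mathbb{F}_2^n\to\mathbb{F}_2$, with an $n$-variable function written $g(X_n,\ldots,X_1)$ and vectors ordered accordingly. Walsh transform: $W_f(\bm{\alpha})=2^{-n}\sum_{\mathbf{x}}(-1)^{f(\mathbf{x})\oplus\langle\mathbf{x},\bm{\alpha}\rangle}$, $\langle\mathbf{x},\bm{\alpha}\rangle=\bigoplus_ix_i\alpha_i$. Logarithms base 2. Min-entropy: $H_\infty(f)=\min_{\bm{\alpha}:W_f^2(\bm{\alpha})\ne0}\log(1/W_f^2(\bm{\alpha}))$. Influence: $\mathrm{Inf}(f)=\sum_{i=1}^n\Pr_{\mathbf{x}}[f(\mathbf{x})\ne f(\mathbf{x}\oplus\mathbf{e}_i)]=\sum_{\bm{\alpha}}\mathrm{wt}(\bm{\alpha})W_f^2(\bm{\alpha})$. *)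

theory Defs
  imports Complex_Main
begin

text \<open>Vectors of F_2^n are bool lists of length n; the head of the list is the
  coordinate of the highest-indexed variable X_n (so (X_n,...,X_1) is the list order).\<close>

definition vecs :: "nat \<Rightarrow> bool list set" where
  "vecs n = {xs. length xs = n}"

definition wt :: "bool list \<Rightarrow> nat" where
  "wt xs = length (filter id xs)"

definition ip :: "bool list \<Rightarrow> bool list \<Rightarrow> bool" where
  "ip x a = odd (length (filter (\<lambda>(u, v). u \<and> v) (zip x a)))"

definition sgn_b :: "bool \<Rightarrow> real" where
  "sgn_b b = (if b then -1 else 1)"

definition walsh :: "nat \<Rightarrow> (bool list \<Rightarrow> bool) \<Rightarrow> bool list \<Rightarrow> real" where
  "walsh n f a = (\<Sum>x\<in>vecs n. sgn_b (f x \<noteq> ip x a)) / 2 ^ n"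

definition min_entropy :: "nat \<Rightarrow> (bool list \<Rightarrow> bool) \<Rightarrow> real" where
  "min_entropy n f = Min {log 2 (1 / (walsh n f a)\<^sup>2) | a. a \<in> vecs n \<and> (walsh n f a)\<^sup>2 \<noteq> 0}"

definition flip :: "nat \<Rightarrow> bool list \<Rightarrow> bool list" where
  "flip i x = x[i := \<not> x ! i]"

definition influence :: "nat \<Rightarrow> (bool list \<Rightarrow> bool) \<Rightarrow> real" where
  "influence n f = (\<Sum>i<n. real (card {x \<in> vecs n. f x \<noteq> f (flip i x)}) / 2 ^ n)"

definition eps :: "nat \<Rightarrow> bool \<Rightarrow> (bool list \<Rightarrow> bool) \<Rightarrow> real" where
  "eps n b g = (\<Sum>a\<in>{a \<in> vecs n. wt a mod 2 \<noteq> of_bool b}. (walsh n g a)\<^sup>2)"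

definition ext_fun :: "(bool list \<Rightarrow> bool) \<Rightarrow> bool \<Rightarrow> bool list \<Rightarrow> bool" where
  "ext_fun g b xs = (case xs of [] \<Rightarrow> g [] |
      x # ys \<Rightarrow> ((\<not> x \<and> g ys) \<noteq> (x \<and> (b \<noteq> g (map Not ys)))))"

end

theory Submission
  imports Defs
begin

text \<open>Split the Walsh sum of g_b at X_{n+1}. Substituting y := not y in the half X_{n+1} = 1
  multiplies the character (-1)^<y,alpha> by (-1)^wt(alpha), so both halves equal W_g(alpha) up to
  the sign (-1)^(b + a + wt(alpha)): they either add up or cancel. The Walsh spectrum of g_b is
  therefore that of g padded with zeros, which gives the min-entropy. Flipping X_i with i <= n acts
  on both halves like flipping it for g, while flipping X_{n+1} compares g(x) with b + g(not x); the
  resulting autocorrelation of g at the all-ones vector is the sum of (-1)^wt(alpha) W_g(alpha)^2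
  by Plancherel, and Parseval turns it into eps_b(g).\<close>

lemma sgn_b_simps [simp]: "sgn_b False = 1" "sgn_b True = -1"
  by (simp_all add: sgn_b_def)

lemma sgn_b_xor: "sgn_b (p \<noteq> q) = sgn_b p * sgn_b q"
  by (simp add: sgn_b_def)

lemma sgn_b_mult_self [simp]: "sgn_b p * sgn_b p = 1"
  by (simp add: sgn_b_def)

lemma minus_one_power_eq_sgn_b: "(-1::real) ^ k = sgn_b (odd k)"
  by (simp add: sgn_b_def minus_one_power_iff)

lemma vecs_0: "vecs 0 = {[]}"
  by (auto simp: vecs_def)

lemma vecs_Suc: "vecs (Suc n) = Cons False ` vecs n \<union> Cons True ` vecs n"
proof -
  have "xs \<in> Cons False ` vecs n \<union> Cons True ` vecs n" if "length xs = Suc n" for xs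
    using that by (cases xs) (auto simp: vecs_def image_iff)
  then show ?thesis by (auto simp: vecs_def)
qed

lemma vecs_SucE:
  assumes "\<beta> \<in> vecs (Suc n)"
  obtains a \<alpha> where "\<beta> = a # \<alpha>" "\<alpha> \<in> vecs n"
  using assms by (cases \<beta>) (auto simp: vecs_def)

lemma finite_vecs [simp]: "finite (vecs n)"
  by (induction n) (auto simp: vecs_0 vecs_Suc)

lemma card_vecs: "card (vecs n) = 2 ^ n"
proof (induction n)
  case 0
  then show ?case by (simp add: vecs_0)
next
  case (Suc n)
  have "card (vecs (Suc n)) = card (Cons False ` vecs n) + card (Cons True ` vecs n)"
    unfolding vecs_Suc by (rule card_Un_disjoint) auto
  then show ?case by (simp add: card_image Suc)
qed

lemma sum_vecs_Suc: "sum f (vecs (Suc n)) = (\<Sum>y\<in>vecs n. f (False # y) + f (True # y))"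
proof -
  have "sum f (vecs (Suc n)) = sum f (Cons False ` vecs n) + sum f (Cons True ` vecs n)"
    unfolding vecs_Suc by (rule sum.union_disjoint) auto
  then show ?thesis by (simp add: sum.reindex sum.distrib)
qed

lemma sum_vecs_map_Not: "(\<Sum>y\<in>vecs n. f (map Not y)) = (\<Sum>y\<in>vecs n. f y)"
  by (rule sum.reindex_bij_witness[of _ "map Not" "map Not"]) (auto simp: vecs_def comp_def)

lemma ip_Nil: "ip [] \<alpha> = False"
  by (simp add: ip_def)

lemma ip_Cons: "ip (c # x) (a # \<alpha>) = ((c \<and> a) \<noteq> ip x \<alpha>)"
  by (cases c; cases a) (simp_all add: ip_def)

lemma ip_map_Not: "length y = length \<alpha> \<Longrightarrow> ip (map Not y) \<alpha> = (odd (wt \<alpha>) \<noteq> ip y \<alpha>)"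
  by (induction y \<alpha> rule: list_induct2) (auto simp: ip_Cons ip_Nil wt_def)

lemma character_orthogonality:
  "x \<in> vecs n \<Longrightarrow> z \<in> vecs n \<Longrightarrow>
    (\<Sum>\<alpha>\<in>vecs n. sgn_b (ip x \<alpha>) * sgn_b (ip z \<alpha>)) = (if x = z then 2 ^ n else 0)"
proof (induction n arbitrary: x z)
  case 0
  then show ?case by (simp add: vecs_0 ip_Nil)
next
  case (Suc n)
  then obtain c x' d z' where xz: "x = c # x'" "z = d # z'" "x' \<in> vecs n" "z' \<in> vecs n"
    by (metis vecs_SucE)
  have "(\<Sum>\<alpha>\<in>vecs (Suc n). sgn_b (ip x \<alpha>) * sgn_b (ip z \<alpha>))
      = (1 + sgn_b c * sgn_b d) * (\<Sum>\<alpha>\<in>vecs n. sgn_b (ip x' \<alpha>) * sgn_b (ip z' \<alpha>))"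
    unfolding sum_vecs_Suc sum_distrib_left
    by (rule sum.cong, simp, cases c; cases d) (simp_all add: xz ip_Cons sgn_b_def)
  then show ?case
    using Suc.IH[OF xz(3,4)] xz by (cases c; cases d) auto
qed

lemma walsh_eq_sum_sgn_b:
  "walsh n f \<alpha> = (\<Sum>x\<in>vecs n. sgn_b (f x) * sgn_b (ip x \<alpha>)) / 2 ^ n"
  unfolding walsh_def sgn_b_xor ..

lemma plancherel:
  "(\<Sum>\<alpha>\<in>vecs n. walsh n f \<alpha> * walsh n h \<alpha>) = (\<Sum>x\<in>vecs n. sgn_b (f x) * sgn_b (h x)) / 2 ^ n"
proof -
  have "walsh n f \<alpha> * walsh n h \<alpha> = (\<Sum>x\<in>vecs n. \<Sum>z\<in>vecs n. sgn_b (f x) * sgn_b (h z) *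
      (sgn_b (ip x \<alpha>) * sgn_b (ip z \<alpha>))) / 2 ^ n / 2 ^ n" for \<alpha>
    unfolding walsh_eq_sum_sgn_b by (simp add: sum_product mult_ac)
  then have "(\<Sum>\<alpha>\<in>vecs n. walsh n f \<alpha> * walsh n h \<alpha>)
      = (\<Sum>x\<in>vecs n. \<Sum>z\<in>vecs n. sgn_b (f x) * sgn_b (h z) *
          (\<Sum>\<alpha>\<in>vecs n. sgn_b (ip x \<alpha>) * sgn_b (ip z \<alpha>))) / 2 ^ n / 2 ^ n"
    by (simp add: sum_divide_distrib[symmetric] sum_distrib_left, subst sum.swap, subst (2) sum.swap) simp
  also have "\<dots> = (\<Sum>x\<in>vecs n. \<Sum>z\<in>vecs n. sgn_b (f x) * sgn_b (h z) *
          (if x = z then 2 ^ n else 0)) / 2 ^ n / 2 ^ n"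
    by (intro arg_cong2[where f = "(/)"] refl sum.cong) (simp add: character_orthogonality)
  also have "\<dots> = (\<Sum>x\<in>vecs n. sgn_b (f x) * sgn_b (h x)) / 2 ^ n"
    by (simp add: if_distrib sum_distrib_right[symmetric] cong: if_cong)
  finally show ?thesis .
qed

lemma parseval: "(\<Sum>\<alpha>\<in>vecs n. (walsh n f \<alpha>)\<^sup>2) = 1"
  using plancherel[of n f f] by (simp add: power2_eq_square card_vecs)

lemma walsh_comp_map_Not:
  assumes "\<alpha> \<in> vecs n"
  shows "walsh n (f \<circ> map Not) \<alpha> = sgn_b (odd (wt \<alpha>)) * walsh n f \<alpha>"
proof -
  have "walsh n (f \<circ> map Not) \<alpha>
      = (\<Sum>x\<in>vecs n. sgn_b (f x) * sgn_b (ip (map Not x) \<alpha>)) / 2 ^ n"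
    unfolding walsh_eq_sum_sgn_b
    using sum_vecs_map_Not[of "\<lambda>x. sgn_b (f x) * sgn_b (ip (map Not x) \<alpha>)" n]
    by (simp add: comp_def)
  also have "\<dots> = (\<Sum>x\<in>vecs n. sgn_b (odd (wt \<alpha>)) * (sgn_b (f x) * sgn_b (ip x \<alpha>))) / 2 ^ n"
    using assms by (intro arg_cong2[where f = "(/)"] refl sum.cong)
      (auto simp: ip_map_Not vecs_def sgn_b_def)
  finally show ?thesis
    by (simp add: walsh_eq_sum_sgn_b sum_distrib_left[symmetric])
qed

lemma sum_parity_walsh_sq:
  "(\<Sum>\<alpha>\<in>vecs n. sgn_b (odd (wt \<alpha>)) * (walsh n f \<alpha>)\<^sup>2)
    = (\<Sum>x\<in>vecs n. sgn_b (f x) * sgn_b (f (map Not x))) / 2 ^ n"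
  using plancherel[of n f "f \<circ> map Not"]
  by (simp add: walsh_comp_map_Not power2_eq_square mult_ac cong: sum.cong)

lemma eps_eq_autocorrelation:
  "eps n b f = (1 - sgn_b b * (\<Sum>x\<in>vecs n. sgn_b (f x) * sgn_b (f (map Not x))) / 2 ^ n) / 2"
proof -
  have "eps n b f = (\<Sum>\<alpha>\<in>vecs n. if wt \<alpha> mod 2 \<noteq> of_bool b then (walsh n f \<alpha>)\<^sup>2 else 0)"
    unfolding eps_def by (rule sum.inter_filter) simp
  also have "\<dots> = (\<Sum>\<alpha>\<in>vecs n. ((walsh n f \<alpha>)\<^sup>2 - sgn_b b * (sgn_b (odd (wt \<alpha>)) * (walsh n f \<alpha>)\<^sup>2)) / 2)"
    by (rule sum.cong, simp, cases b; cases "odd (wt x)") (auto simp: sgn_b_def)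
  finally show ?thesis
    by (simp add: sum_divide_distrib[symmetric] sum_subtractf sum_distrib_left[symmetric]
        parseval sum_parity_walsh_sq)
qed

lemma ext_fun_False [simp]: "ext_fun g b (False # y) = g y"
  by (simp add: ext_fun_def)

lemma ext_fun_True [simp]: "ext_fun g b (True # y) = (b \<noteq> g (map Not y))"
  by (simp add: ext_fun_def)

lemma walsh_ext_fun_sgn_b:
  assumes "\<alpha> \<in> vecs n"
  shows "walsh (Suc n) (ext_fun g b) (a # \<alpha>)
    = (1 + sgn_b b * sgn_b a * sgn_b (odd (wt \<alpha>))) / 2 * walsh n g \<alpha>"
proof -
  have "walsh (Suc n) (ext_fun g b) (a # \<alpha>)
      = ((\<Sum>y\<in>vecs n. sgn_b (g y) * sgn_b (ip y \<alpha>))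
         + sgn_b b * sgn_b a * (\<Sum>y\<in>vecs n. sgn_b (g (map Not y)) * sgn_b (ip y \<alpha>))) / 2 ^ Suc n"
    unfolding walsh_eq_sum_sgn_b sum_vecs_Suc ext_fun_False ext_fun_True ip_Cons sgn_b_xor
    by (simp add: sum.distrib sum_distrib_left mult_ac)
  then show ?thesis
    using walsh_comp_map_Not[OF assms, of g]
    by (simp add: walsh_eq_sum_sgn_b field_simps)
qed

lemma walsh_ext_fun:
  assumes "\<alpha> \<in> vecs n"
  shows "walsh (Suc n) (ext_fun g b) (a # \<alpha>)
    = (1 + (-1) ^ (of_bool b + wt (a # \<alpha>))) / 2 * walsh n g \<alpha>"
proof -
  have "(-1::real) ^ (of_bool b + wt (a # \<alpha>)) = sgn_b b * sgn_b a * sgn_b (odd (wt \<alpha>))"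
    unfolding minus_one_power_eq_sgn_b by (cases a; cases b) (simp_all add: wt_def sgn_b_def)
  then show ?thesis
    using walsh_ext_fun_sgn_b[OF assms] by simp
qed

lemma walsh_ext_fun_eq_if:
  assumes "\<alpha> \<in> vecs n"
  shows "walsh (Suc n) (ext_fun g b) (a # \<alpha>) = (if a = (b \<noteq> odd (wt \<alpha>)) then walsh n g \<alpha> else 0)"
  unfolding walsh_ext_fun_sgn_b[OF assms]
  by (cases a; cases b; cases "odd (wt \<alpha>)") simp_all

lemma nonzero_walsh_values_ext_fun:
  "{walsh (Suc n) (ext_fun g b) \<beta> | \<beta>. \<beta> \<in> vecs (Suc n) \<and> walsh (Suc n) (ext_fun g b) \<beta> \<noteq> 0}
    = {walsh n g \<alpha> | \<alpha>. \<alpha> \<in> vecs n \<and> walsh n g \<alpha> \<noteq> 0}"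
proof (intro equalityI subsetI)
  fix w
  assume "w \<in> {walsh (Suc n) (ext_fun g b) \<beta> | \<beta>. \<beta> \<in> vecs (Suc n) \<and> walsh (Suc n) (ext_fun g b) \<beta> \<noteq> 0}"
  then obtain a \<alpha> where "\<alpha> \<in> vecs n" "w = walsh (Suc n) (ext_fun g b) (a # \<alpha>)" "w \<noteq> 0"
    by (auto elim: vecs_SucE)
  then show "w \<in> {walsh n g \<alpha> | \<alpha>. \<alpha> \<in> vecs n \<and> walsh n g \<alpha> \<noteq> 0}"
    by (auto simp: walsh_ext_fun_eq_if split: if_splits)
next
  fix w
  assume "w \<in> {walsh n g \<alpha> | \<alpha>. \<alpha> \<in> vecs n \<and> walsh n g \<alpha> \<noteq> 0}"
  then obtain \<alpha> where \<alpha>: "\<alpha> \<in> vecs n" "w = walsh n g \<alpha>" "w \<noteq> 0"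
    by blast
  then have "w = walsh (Suc n) (ext_fun g b) ((b \<noteq> odd (wt \<alpha>)) # \<alpha>)"
    by (simp add: walsh_ext_fun_eq_if)
  moreover have "(b \<noteq> odd (wt \<alpha>)) # \<alpha> \<in> vecs (Suc n)"
    using \<alpha>(1) by (simp add: vecs_def)
  ultimately show "w \<in> {walsh (Suc n) (ext_fun g b) \<beta> | \<beta>. \<beta> \<in> vecs (Suc n) \<and> walsh (Suc n) (ext_fun g b) \<beta> \<noteq> 0}"
    using \<alpha>(3) by blast
qed

lemma min_entropy_eq_Min_image:
  "min_entropy n f = Min ((\<lambda>w. log 2 (1 / w\<^sup>2)) ` {walsh n f \<alpha> | \<alpha>. \<alpha> \<in> vecs n \<and> walsh n f \<alpha> \<noteq> 0})"
  unfolding min_entropy_def by (rule arg_cong[where f = Min]) auto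

definition coord_influence :: "nat \<Rightarrow> (bool list \<Rightarrow> bool) \<Rightarrow> nat \<Rightarrow> real" where
  "coord_influence n f i = real (card {x \<in> vecs n. f x \<noteq> f (flip i x)}) / 2 ^ n"

lemma influence_eq_sum_coord_influence: "influence n f = (\<Sum>i<n. coord_influence n f i)"
  by (simp add: influence_def coord_influence_def)

lemma card_filter_vecs: "real (card {x \<in> vecs n. P x}) = (\<Sum>x\<in>vecs n. if P x then 1 else 0)"
  by (simp add: sum.inter_filter[symmetric])

lemma coord_influence_ext_fun_head: "coord_influence (Suc n) (ext_fun g b) 0 = eps n b g"
proof -
  have "real (card {x \<in> vecs (Suc n). ext_fun g b x \<noteq> ext_fun g b (flip 0 x)})
      = (\<Sum>y\<in>vecs n. 1 - sgn_b b * (sgn_b (g y) * sgn_b (g (map Not y))))"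
    unfolding card_filter_vecs sum_vecs_Suc
    by (rule sum.cong) (auto simp: flip_def sgn_b_def)
  also have "\<dots> = 2 ^ n - sgn_b b * (\<Sum>y\<in>vecs n. sgn_b (g y) * sgn_b (g (map Not y)))"
    by (simp add: sum_subtractf sum_distrib_left card_vecs)
  finally show ?thesis
    unfolding coord_influence_def eps_eq_autocorrelation by (simp add: field_simps)
qed

lemma coord_influence_ext_fun_tail:
  assumes "i < n"
  shows "coord_influence (Suc n) (ext_fun g b) (Suc i) = coord_influence n g i"
proof -
  let ?h = "\<lambda>y. if g y \<noteq> g (flip i y) then 1 else (0::real)"
  have "real (card {x \<in> vecs (Suc n). ext_fun g b x \<noteq> ext_fun g b (flip (Suc i) x)})
      = (\<Sum>y\<in>vecs n. ?h y + ?h (map Not y))"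
    unfolding card_filter_vecs sum_vecs_Suc
  proof (rule sum.cong)
    fix y
    assume "y \<in> vecs n"
    then have "map Not (flip i y) = flip i (map Not y)"
      using assms by (simp add: flip_def map_update vecs_def)
    then show "(if ext_fun g b (False # y) \<noteq> ext_fun g b (flip (Suc i) (False # y)) then 1 else 0)
        + (if ext_fun g b (True # y) \<noteq> ext_fun g b (flip (Suc i) (True # y)) then 1 else 0)
        = ?h y + ?h (map Not y)"
      by (auto simp: flip_def)
  qed simp
  also have "\<dots> = 2 * (\<Sum>y\<in>vecs n. ?h y)"
    using sum_vecs_map_Not[of ?h n] by (simp only: sum.distrib)
  finally show ?thesis
    by (simp add: coord_influence_def card_filter_vecs)
qed

theorem proposition2:
  fixes n :: nat and g :: "bool list \<Rightarrow> bool" and b :: bool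
  shows "(\<forall>a \<alpha>. \<alpha> \<in> vecs n \<longrightarrow>
            walsh (Suc n) (ext_fun g b) (a # \<alpha>)
              = (1 + (-1) ^ (of_bool b + wt (a # \<alpha>))) / 2 * walsh n g \<alpha>)
       \<and> min_entropy (Suc n) (ext_fun g b) = min_entropy n g
       \<and> influence (Suc n) (ext_fun g b) = influence n g + eps n b g"
proof (intro conjI allI impI)
  show "walsh (Suc n) (ext_fun g b) (a # \<alpha>)
      = (1 + (-1) ^ (of_bool b + wt (a # \<alpha>))) / 2 * walsh n g \<alpha>" if "\<alpha> \<in> vecs n" for a \<alpha>
    using that by (rule walsh_ext_fun)
  show "min_entropy (Suc n) (ext_fun g b) = min_entropy n g"
    unfolding min_entropy_eq_Min_image nonzero_walsh_values_ext_fun ..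
  have "(\<Sum>i<n. coord_influence (Suc n) (ext_fun g b) (Suc i)) = (\<Sum>i<n. coord_influence n g i)"
    by (simp add: coord_influence_ext_fun_tail)
  then show "influence (Suc n) (ext_fun g b) = influence n g + eps n b g"
    unfolding influence_eq_sum_coord_influence sum.lessThan_Suc_shift coord_influence_ext_fun_head
    by simp
qed

end
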